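(* Let $\textsc{prop}$ be a finite set of propositional variables and $w$ a propositional variable not in $\textsc{prop}$. Then (1) $\mathrm{PL}_{\{\oplus_3\}}[\textsc{prop}]\leq_{pc}\mathrm{PL}_{\{\mathsf{oxor}\}}[\textsc{prop}\cup\{w\}]$, and (2) $\mathrm{PL}_{\{\oplus_3\}}[\textsc{prop}]\leq_{pc}\mathrm{PL}_{\{\mathsf{aimp}\}}[\textsc{prop}\cup\{w\}]$.
   Context: $\oplus_3(x,y,z)=x\oplus y\oplus z$, $\mathsf{oxor}(x,y,z)=x\lor(y\oplus z)$, $\mathsf{aimp}(x,y,z)=x\land(y\to z)$. For a set $O$ of Boolean functions and finite variable set $P$, $\mathrm{PL}_O[P]$ is the set of formulas $\phi::=x\mid f(\phi_1,\dots,\phi_n)$ with $x\in P$, $f\in O$, viewed as the concept class whose concepts are these formulas, whose examples are truth assignments $V:P\to\{0,1\}$, and where $\lambda(\phi)$ is the set of satisfying assignments. For concept classes $\mathcal{C}_i=(C_i,E_i,\lambda_i)$, $\mathcal{C}_1\leq_{pc}\mathcal{C}_2$ means there are $f:C_1\to C_2$ and $h:E_1\to E_2$ such that (i) for all $c\in C_1,e\in E_1$: $e\in\lambda_1(c)$ iff $h(e)\in\lambda_2(f(c))$; and (ii) for each $e\in E_2$, either $e\in\lambda_2(f(c))$ for all $c\in C_1$, or for no $c\in C_1$, or there is $e'\in E_1$ with $\{c\mid e\in\lambda_2(f(c))\}=\{c\mid e'\in\lambda_1(c)\}$. *)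

theory Defs
  imports Main
begin

(* Boolean functions of given arity: an operator is a pair (n, f) where n is the arity
   and f is applied to the list of the n argument values. *)
type_synonym boolfun = "nat \<times> (bool list \<Rightarrow> bool)"

datatype 'v form = Var 'v | App boolfun "'v form list"

fun wf_form :: "boolfun set \<Rightarrow> 'v set \<Rightarrow> 'v form \<Rightarrow> bool" where
  "wf_form Ops P (Var x) = (x \<in> P)"
| "wf_form Ops P (App g args) = (g \<in> Ops \<and> length args = fst g \<and> (\<forall>a\<in>set args. wf_form Ops P a))"

(* truth assignment V : P -> {0,1}, represented by the set of variables mapped to 1 *)
fun eval_form :: "'v set \<Rightarrow> 'v form \<Rightarrow> bool" where
  "eval_form V (Var x) = (x \<in> V)"
| "eval_form V (App g args) = snd g (map (eval_form V) args)"

definition xor3 :: "bool list \<Rightarrow> bool" where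
  "xor3 xs = (xs ! 0 \<noteq> (xs ! 1 \<noteq> xs ! 2))"
definition oxor :: "bool list \<Rightarrow> bool" where
  "oxor xs = (xs ! 0 \<or> (xs ! 1 \<noteq> xs ! 2))"
definition aimp :: "bool list \<Rightarrow> bool" where
  "aimp xs = (xs ! 0 \<and> (xs ! 1 \<longrightarrow> xs ! 2))"

definition PL_concepts :: "boolfun set \<Rightarrow> 'v set \<Rightarrow> 'v form set" where
  "PL_concepts Ops P = {\<phi>. wf_form Ops P \<phi>}"
definition PL_examples :: "'v set \<Rightarrow> 'v set set" where
  "PL_examples P = Pow P"
definition PL_lambda :: "'v set \<Rightarrow> 'v form \<Rightarrow> 'v set set" where
  "PL_lambda P \<phi> = {V \<in> Pow P. eval_form V \<phi>}"

(* polynomial-time-free "concept class reduction" <=_pc as defined in the paper *)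
definition pc_reduces ::
  "'c1 set \<Rightarrow> 'e1 set \<Rightarrow> ('c1 \<Rightarrow> 'e1 set) \<Rightarrow> 'c2 set \<Rightarrow> 'e2 set \<Rightarrow> ('c2 \<Rightarrow> 'e2 set) \<Rightarrow> bool" where
  "pc_reduces C1 E1 lam1 C2 E2 lam2 \<longleftrightarrow>
    (\<exists>f h. (\<forall>c\<in>C1. f c \<in> C2) \<and> (\<forall>e\<in>E1. h e \<in> E2) \<and>
       (\<forall>c\<in>C1. \<forall>e\<in>E1. e \<in> lam1 c \<longleftrightarrow> h e \<in> lam2 (f c)) \<and>
       (\<forall>e\<in>E2. (\<forall>c\<in>C1. e \<in> lam2 (f c)) \<or> (\<forall>c\<in>C1. e \<notin> lam2 (f c)) \<or>
          (\<exists>e'\<in>E1. {c\<in>C1. e \<in> lam2 (f c)} = {c\<in>C1. e' \<in> lam1 c})))"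

abbreviation PL_pc_reduces ::
  "boolfun set \<Rightarrow> 'v set \<Rightarrow> boolfun set \<Rightarrow> 'v set \<Rightarrow> bool" where
  "PL_pc_reduces Ops1 P1 Ops2 P2 \<equiv>
     pc_reduces (PL_concepts Ops1 P1) (PL_examples P1) (PL_lambda P1)
                (PL_concepts Ops2 P2) (PL_examples P2) (PL_lambda P2)"

end

theory Submission
  imports Defs
begin

(* Since xor3 [p, q, r] = p xor (q xor r) = p iff (q iff r), a ternary xor formula can be
   rebuilt with a binary gadget for xor resp. iff.  Neither oxor nor aimp can express these
   connectives outright, but under a guard variable w they can: oxor(w, x, y) computes
   w or (x xor y), and aimp(aimp(w, x, y), y, x) computes w and (x iff y).  Translating every
   subformula into its guarded version turns a concept c into w or c (resp. w and c).
   Assignments that set w are then positive (resp. negative) for every translated concept,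
   and on the remaining ones the translated concept agrees with c, because c does not
   mention w. *)

lemma length_3_conv: "length xs = 3 \<Longrightarrow> \<exists>a b c. xs = [a, b, c]"
  by (auto simp: numeral_3_eq_3 length_Suc_conv)

lemma eval_form_cong:
  "wf_form Ops P \<phi> \<Longrightarrow> V \<inter> P = V' \<inter> P \<Longrightarrow> eval_form V \<phi> = eval_form V' \<phi>"
proof (induction \<phi>)
  case (Var x)
  then show ?case by auto
next
  case (App g args)
  then have "map (eval_form V) args = map (eval_form V') args" by simp
  then show ?case by (metis eval_form.simps(2))
qed

lemma eval_form_insert_fresh:
  "wf_form Ops P \<phi> \<Longrightarrow> w \<notin> P \<Longrightarrow> eval_form (insert w V) \<phi> = eval_form V \<phi>"
  by (rule eval_form_cong) auto

lemma PL_pc_reduces_disj_guard: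
  assumes "w \<notin> P"
    and wf_tr: "\<And>\<phi>. wf_form Ops1 P \<phi> \<Longrightarrow> wf_form Ops2 (P \<union> {w}) (tr \<phi>)"
    and eval_tr: "\<And>\<phi> V. wf_form Ops1 P \<phi> \<Longrightarrow> eval_form V (tr \<phi>) = (w \<in> V \<or> eval_form V \<phi>)"
  shows "PL_pc_reduces Ops1 P Ops2 (P \<union> {w})"
  unfolding pc_reduces_def
proof (intro exI[of _ tr] exI[of _ id] conjI ballI)
  fix c e
  assume c: "c \<in> PL_concepts Ops1 P" and e: "e \<in> PL_examples P"
  then have "w \<notin> e" using \<open>w \<notin> P\<close> by (auto simp: PL_examples_def)
  then show "e \<in> PL_lambda P c \<longleftrightarrow> id e \<in> PL_lambda (P \<union> {w}) (tr c)"
    using c e eval_tr by (auto simp: PL_concepts_def PL_examples_def PL_lambda_def)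
next
  fix e
  assume e: "e \<in> PL_examples (P \<union> {w})"
  let ?pos = "{c \<in> PL_concepts Ops1 P. e \<in> PL_lambda (P \<union> {w}) (tr c)}"
  show "(\<forall>c\<in>PL_concepts Ops1 P. e \<in> PL_lambda (P \<union> {w}) (tr c)) \<or>
        (\<forall>c\<in>PL_concepts Ops1 P. e \<notin> PL_lambda (P \<union> {w}) (tr c)) \<or>
        (\<exists>e'\<in>PL_examples P. ?pos = {c \<in> PL_concepts Ops1 P. e' \<in> PL_lambda P c})"
  proof (cases "w \<in> e")
    case True
    then show ?thesis
      using e eval_tr by (auto simp: PL_concepts_def PL_examples_def PL_lambda_def)
  next
    case False
    then have "e \<in> PL_examples P" using e by (auto simp: PL_examples_def)
    moreover have "?pos = {c \<in> PL_concepts Ops1 P. e \<in> PL_lambda P c}"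
      using False e eval_tr by (auto simp: PL_concepts_def PL_examples_def PL_lambda_def)
    ultimately show ?thesis by blast
  qed
qed (use wf_tr in \<open>auto simp: PL_concepts_def PL_examples_def\<close>)

lemma PL_pc_reduces_conj_guard:
  assumes "w \<notin> P"
    and wf_tr: "\<And>\<phi>. wf_form Ops1 P \<phi> \<Longrightarrow> wf_form Ops2 (P \<union> {w}) (tr \<phi>)"
    and eval_tr: "\<And>\<phi> V. wf_form Ops1 P \<phi> \<Longrightarrow> eval_form V (tr \<phi>) = (w \<in> V \<and> eval_form V \<phi>)"
  shows "PL_pc_reduces Ops1 P Ops2 (P \<union> {w})"
  unfolding pc_reduces_def
proof (intro exI[of _ tr] exI[of _ "insert w"] conjI ballI)
  fix c e
  assume c: "c \<in> PL_concepts Ops1 P" and e: "e \<in> PL_examples P"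
  then have "eval_form (insert w e) c = eval_form e c"
    using \<open>w \<notin> P\<close> by (simp add: PL_concepts_def eval_form_insert_fresh)
  then show "e \<in> PL_lambda P c \<longleftrightarrow> insert w e \<in> PL_lambda (P \<union> {w}) (tr c)"
    using c e eval_tr by (auto simp: PL_concepts_def PL_examples_def PL_lambda_def)
next
  fix e
  assume e: "e \<in> PL_examples (P \<union> {w})"
  let ?pos = "{c \<in> PL_concepts Ops1 P. e \<in> PL_lambda (P \<union> {w}) (tr c)}"
  show "(\<forall>c\<in>PL_concepts Ops1 P. e \<in> PL_lambda (P \<union> {w}) (tr c)) \<or>
        (\<forall>c\<in>PL_concepts Ops1 P. e \<notin> PL_lambda (P \<union> {w}) (tr c)) \<or>
        (\<exists>e'\<in>PL_examples P. ?pos = {c \<in> PL_concepts Ops1 P. e' \<in> PL_lambda P c})"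
  proof (cases "w \<in> e")
    case False
    then show ?thesis
      using eval_tr by (auto simp: PL_concepts_def PL_lambda_def)
  next
    case True
    have e': "e - {w} \<in> PL_examples P" using e by (auto simp: PL_examples_def)
    have "eval_form e c = eval_form (e - {w}) c" if "c \<in> PL_concepts Ops1 P" for c
      using that \<open>w \<notin> P\<close> True eval_form_insert_fresh[of Ops1 P c w "e - {w}"]
      by (simp add: PL_concepts_def insert_absorb)
    then have "?pos = {c \<in> PL_concepts Ops1 P. e - {w} \<in> PL_lambda P c}"
      using True e eval_tr by (auto simp: PL_concepts_def PL_examples_def PL_lambda_def)
    with e' show ?thesis by blast
  qed
qed (use wf_tr in \<open>auto simp: PL_concepts_def PL_examples_def\<close>)

fun translate :: "('v \<Rightarrow> 'v form) \<Rightarrow> ('v form \<Rightarrow> 'v form \<Rightarrow> 'v form) \<Rightarrow> 'v form \<Rightarrow> 'v form"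
where
  "translate leaf g (Var x) = leaf x"
| "translate leaf g (App f args) =
     (let ts = map (translate leaf g) args in g (ts ! 0) (g (ts ! 1) (ts ! 2)))"

lemma wf_translate:
  assumes "wf_form {(3, f)} P \<phi>"
    and "\<And>x. x \<in> P \<Longrightarrow> wf_form Ops Q (leaf x)"
    and "\<And>a b. wf_form Ops Q a \<Longrightarrow> wf_form Ops Q b \<Longrightarrow> wf_form Ops Q (g a b)"
  shows "wf_form Ops Q (translate leaf g \<phi>)"
  using assms(1)
proof (induction \<phi>)
  case (Var x)
  then show ?case using assms(2) by simp
next
  case (App h args)
  then obtain a b c where "args = [a, b, c]" using length_3_conv by force
  then show ?case using App assms(3) by simp
qed

lemma eval_translate:
  assumes "wf_form {(3, f)} P \<phi>"
    and "\<And>p q r. f [p, q, r] = op p (op q r)"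
    and "\<And>x. eval_form V (leaf x) = G (x \<in> V)"
    and "\<And>a b p q. eval_form V a = G p \<Longrightarrow> eval_form V b = G q \<Longrightarrow>
                     eval_form V (g a b) = G (op p q)"
  shows "eval_form V (translate leaf g \<phi>) = G (eval_form V \<phi>)"
  using assms(1)
proof (induction \<phi>)
  case (Var x)
  then show ?case using assms(3) by simp
next
  case (App h args)
  then obtain a b c where "args = [a, b, c]" using length_3_conv by force
  then show ?case using App assms(2,4) by simp
qed

definition oxor_form :: "'v form \<Rightarrow> 'v form \<Rightarrow> 'v form \<Rightarrow> 'v form" where
  "oxor_form a b c = App (3, oxor) [a, b, c]"

definition aimp_form :: "'v form \<Rightarrow> 'v form \<Rightarrow> 'v form \<Rightarrow> 'v form" where
  "aimp_form a b c = App (3, aimp) [a, b, c]"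

lemma eval_oxor_form [simp]:
  "eval_form V (oxor_form a b c) = (eval_form V a \<or> eval_form V b \<noteq> eval_form V c)"
  by (simp add: oxor_form_def oxor_def)

lemma eval_aimp_form [simp]:
  "eval_form V (aimp_form a b c) = (eval_form V a \<and> (eval_form V b \<longrightarrow> eval_form V c))"
  by (simp add: aimp_form_def aimp_def)

lemma wf_oxor_form [simp]:
  "(3, oxor) \<in> Ops \<Longrightarrow>
     wf_form Ops P (oxor_form a b c) \<longleftrightarrow> wf_form Ops P a \<and> wf_form Ops P b \<and> wf_form Ops P c"
  by (auto simp: oxor_form_def)

lemma wf_aimp_form [simp]:
  "(3, aimp) \<in> Ops \<Longrightarrow>
     wf_form Ops P (aimp_form a b c) \<longleftrightarrow> wf_form Ops P a \<and> wf_form Ops P b \<and> wf_form Ops P c"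
  by (auto simp: aimp_form_def)

definition oxor_translation :: "'v \<Rightarrow> 'v form \<Rightarrow> 'v form" where
  "oxor_translation w =
     translate (\<lambda>x. oxor_form (Var w) (Var x) (Var w)) (\<lambda>a b. oxor_form (Var w) a b)"

definition aimp_translation :: "'v \<Rightarrow> 'v form \<Rightarrow> 'v form" where
  "aimp_translation w =
     translate (\<lambda>x. aimp_form (Var w) (Var w) (Var x)) (\<lambda>a b. aimp_form (aimp_form (Var w) a b) b a)"

lemma xor3_eq_xor_xor: "xor3 [p, q, r] = (p \<noteq> (q \<noteq> r))"
  by (simp add: xor3_def)

lemma xor3_eq_iff_iff: "xor3 [p, q, r] = (p \<longleftrightarrow> (q \<longleftrightarrow> r))"
  by (auto simp: xor3_def)

lemma wf_oxor_translation:
  "wf_form {(3, xor3)} P \<phi> \<Longrightarrow> wf_form {(3, oxor)} (P \<union> {w}) (oxor_translation w \<phi>)"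
  unfolding oxor_translation_def by (rule wf_translate) auto

lemma wf_aimp_translation:
  "wf_form {(3, xor3)} P \<phi> \<Longrightarrow> wf_form {(3, aimp)} (P \<union> {w}) (aimp_translation w \<phi>)"
  unfolding aimp_translation_def by (rule wf_translate) auto

lemma eval_oxor_translation:
  "wf_form {(3, xor3)} P \<phi> \<Longrightarrow> eval_form V (oxor_translation w \<phi>) = (w \<in> V \<or> eval_form V \<phi>)"
  unfolding oxor_translation_def
  by (rule eval_translate[where op = "(\<noteq>)" and G = "\<lambda>p. w \<in> V \<or> p", OF _ xor3_eq_xor_xor]) auto

lemma eval_aimp_translation:
  "wf_form {(3, xor3)} P \<phi> \<Longrightarrow> eval_form V (aimp_translation w \<phi>) = (w \<in> V \<and> eval_form V \<phi>)"
  unfolding aimp_translation_def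
  by (rule eval_translate[where op = "(=)" and G = "\<lambda>p. w \<in> V \<and> p", OF _ xor3_eq_iff_iff]) auto

theorem propositionA7:
  fixes Props :: "'v set" and w :: 'v
  assumes "finite Props" and "w \<notin> Props"
  shows "PL_pc_reduces {(3, xor3)} Props {(3, oxor)} (Props \<union> {w})
       \<and> PL_pc_reduces {(3, xor3)} Props {(3, aimp)} (Props \<union> {w})"
proof
  show "PL_pc_reduces {(3, xor3)} Props {(3, oxor)} (Props \<union> {w})"
    using \<open>w \<notin> Props\<close> wf_oxor_translation eval_oxor_translation
    by (rule PL_pc_reduces_disj_guard)
  show "PL_pc_reduces {(3, xor3)} Props {(3, aimp)} (Props \<union> {w})"
    using \<open>w \<notin> Props\<close> wf_aimp_translation eval_aimp_translation
    by (rule PL_pc_reduces_conj_guard)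
qed

end
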